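(* Let $f\in\mathbb{Q}[x]$ be a non-zero squarefree polynomial of degree $n$ and let $g\in\mathbb{Q}[x]$ satisfy $g(\xi)>0$ at every real root $\xi$ of $f$. Then there exist polynomials $h_1,\dots,h_n\in\mathbb{Q}[x]$ of degree $<n$ and positive weights $\omega_1,\dots,\omega_n\in\mathbb{Q}_{>0}$ such that $h:=\sum_{i=1}^n\omega_ih_i^2$ satisfies $h\equiv g\pmod f$. *)

theory Defs
  imports Complex_Main "HOL-Computational_Algebra.Polynomial" "HOL-Computational_Algebra.Squarefree"
begin

end

theory Submission
  imports "Berlekamp_Zassenhaus.Square_Free_Int_To_Square_Free_GFp" Defs
begin

(* Work modulo f over the reals first. Since f is squarefree its complex roots are simple, so for
   small \<delta> > 0 the residue g - \<delta> (1 + x^2 + ... + x^(2n-2)), which is positive at the real roots,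
   has square roots at all complex roots that are compatible with conjugation; interpolating them
   gives a real u of degree < n with g \<equiv> u^2 + \<delta> (1 + ... + x^(2n-2)) mod f. That is, g is
   represented modulo f by the positive definite Gram matrix a a^T + \<delta> I, a the coefficient vector
   of u. Positive definiteness is an open condition and the Gram matrices representing g modulo f
   form an affine space defined over Q, so a nearby rational Gram matrix represents g exactly, and
   its LDL^T decomposition over Q yields the n weighted squares. *)

(* The Berlekamp-Zassenhaus import brings HOL-Algebra's coeff, monom and smult into scope. *)
hide_const (open) up_ring.coeff up_ring.monom module.smult

interpretation of_rat_poly_hom: map_poly_inj_idom_hom of_rat ..
interpretation of_real_poly_hom: map_poly_inj_idom_hom of_real ..

(* gram_poly P n is v^T P v for the vector of monomials v = (1, x, ..., x^(n-1)). *)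
definition gram_poly :: "(nat \<Rightarrow> nat \<Rightarrow> 'a::comm_semiring_1) \<Rightarrow> nat \<Rightarrow> 'a poly" where
  "gram_poly P n = (\<Sum>k<n. \<Sum>l<n. monom (P k l) (k + l))"

lemma coeff_gram_poly: "coeff (gram_poly P n) m = (\<Sum>k<n. \<Sum>l<n. if k + l = m then P k l else 0)"
  by (simp add: gram_poly_def coeff_sum coeff_monom)

lemma degree_gram_poly_le: "degree (gram_poly P n) \<le> 2 * n - 2"
  by (rule degree_le) (auto simp: coeff_gram_poly intro!: sum.neutral)

lemma gram_poly_add: "gram_poly (\<lambda>k l. P k l + Q k l) n = gram_poly P n + gram_poly Q n"
  by (simp add: gram_poly_def add_monom [symmetric] sum.distrib)

lemma gram_poly_diff:
  "gram_poly (\<lambda>k l. P k l - Q k l) n = gram_poly P n - (gram_poly Q n :: 'a::comm_ring_1 poly)"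
  by (simp add: gram_poly_def diff_monom [symmetric] sum_subtractf)

lemma gram_poly_outer: "gram_poly (\<lambda>k l. a k * a l) n = (\<Sum>k<n. monom (a k) k) ^ 2"
  by (simp add: gram_poly_def power2_eq_square sum_product mult_monom)

lemma gram_poly_diagonal: "gram_poly (\<lambda>k l. if k = l then c else 0) n = (\<Sum>k<n. monom c (2 * k))"
proof -
  have "gram_poly (\<lambda>k l. if k = l then c else 0) n
      = (\<Sum>k<n. \<Sum>l<n. if k = l then monom c (k + l) else 0)"
    unfolding gram_poly_def by (intro sum.cong refl) auto
  then show ?thesis by (simp add: sum.delta mult_2)
qed

lemma map_poly_gram_poly:
  "map_poly (of_rat :: rat \<Rightarrow> 'a::field_char_0) (gram_poly P n) = gram_poly (\<lambda>k l. of_rat (P k l)) n"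
  by (rule poly_eqI) (simp add: coeff_map_poly coeff_gram_poly of_rat_sum if_distrib cong: if_cong)

lemma gram_poly_weighted_squares:
  assumes "\<And>k l. k < n \<Longrightarrow> l < n \<Longrightarrow> P k l = (\<Sum>i\<in>I. d i * L i k * L i l)"
  shows "gram_poly P n = (\<Sum>i\<in>I. smult (d i) ((\<Sum>k<n. monom (L i k) k) ^ 2))"
proof -
  have "gram_poly P n = (\<Sum>k<n. \<Sum>l<n. \<Sum>i\<in>I. monom (d i * L i k * L i l) (k + l))"
    unfolding gram_poly_def using assms by (simp add: monom_sum)
  also have "\<dots> = (\<Sum>i\<in>I. \<Sum>k<n. \<Sum>l<n. monom (d i * L i k * L i l) (k + l))"
    by (simp add: sum.swap [of _ I] sum.swap [of _ I "{..<n}"])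
  also have "\<dots> = (\<Sum>i\<in>I. smult (d i) ((\<Sum>k<n. monom (L i k) k) ^ 2))"
    by (intro sum.cong refl)
       (simp add: power2_eq_square sum_product mult_monom smult_sum2 smult_monom mult.assoc)
  finally show ?thesis .
qed

lemma abs_coeff_gram_poly_le:
  fixes P :: "nat \<Rightarrow> nat \<Rightarrow> 'a::linordered_idom"
  assumes "\<And>k l. k < n \<Longrightarrow> l < n \<Longrightarrow> \<bar>P k l\<bar> \<le> \<epsilon>"
  shows "\<bar>coeff (gram_poly P n) m\<bar> \<le> of_nat (n * n) * \<epsilon>"
proof -
  have "\<bar>coeff (gram_poly P n) m\<bar> \<le> (\<Sum>k<n. \<Sum>l<n. \<epsilon>)"
    unfolding coeff_gram_poly
    by (rule order_trans [OF sum_abs], rule sum_mono, rule order_trans [OF sum_abs], rule sum_mono)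
       (use assms order_trans [OF _ assms] in auto)
  then show ?thesis by simp
qed

lemma exists_hankel_gram:
  fixes e :: "'a::linordered_field poly"
  assumes "0 < n" "degree e \<le> 2 * n - 2"
  obtains E where "gram_poly E n = e" "\<And>k l. E k l = E l k" "\<And>k l. \<bar>E k l\<bar> \<le> \<bar>coeff e (k + l)\<bar>"
proof
  \<comment> \<open>Spread each coefficient of e evenly over the c m entries of its antidiagonal k + l = m.\<close>
  define c where "c m = (\<Sum>k<n. \<Sum>l<n. if k + l = m then 1 else 0 :: 'a)" for m
  have c_ge_1: "1 \<le> c m" if "m \<le> 2 * n - 2" for m
  proof -
    define k where "k = min m (n - 1)"
    have k: "k < n" "m - k < n" "k + (m - k) = m" using that assms by (auto simp: k_def)
    have "(1::'a) \<le> (\<Sum>l<n. if k + l = m then 1 else 0)"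
      using member_le_sum [of "m - k" "{..<n}" "\<lambda>l. if k + l = m then 1 else (0::'a)"] k by auto
    also have "\<dots> \<le> c m" unfolding c_def
      by (rule member_le_sum [of k]) (use k in \<open>auto intro: sum_nonneg\<close>)
    finally show ?thesis .
  qed
  define E where "E k l = coeff e (k + l) / c (k + l)" for k l
  show "gram_poly E n = e"
  proof (rule poly_eqI)
    fix m
    show "coeff (gram_poly E n) m = coeff e m"
    proof (cases "m \<le> 2 * n - 2")
      case True
      have "coeff (gram_poly E n) m = (\<Sum>k<n. \<Sum>l<n. (if k + l = m then 1 else 0) * (coeff e m / c m))"
        unfolding coeff_gram_poly by (intro sum.cong refl) (auto simp: E_def)
      also have "\<dots> = c m * (coeff e m / c m)" by (simp only: c_def sum_distrib_right)
      finally show ?thesis using c_ge_1 [OF True] by simp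
    next
      case False
      then show ?thesis
        using degree_gram_poly_le [of E n] assms(2) by (simp add: coeff_eq_0)
    qed
  qed
  show "E k l = E l k" for k l by (simp add: E_def add.commute)
  show "\<bar>E k l\<bar> \<le> \<bar>coeff e (k + l)\<bar>" for k l
  proof (cases "k + l \<le> 2 * n - 2")
    case True
    then have "0 < c (k + l)" using c_ge_1 by fastforce
    then have "\<bar>E k l\<bar> = \<bar>coeff e (k + l)\<bar> / c (k + l)" by (simp add: E_def abs_divide)
    also have "\<dots> \<le> \<bar>coeff e (k + l)\<bar>"
      using c_ge_1 [OF True] by (simp add: divide_le_eq mult_le_cancel_left1)
    finally show ?thesis .
  next
    case False
    then show ?thesis using assms(2) by (simp add: E_def coeff_eq_0)
  qed
qed

definition pos_def_on :: "'i set \<Rightarrow> ('i \<Rightarrow> 'i \<Rightarrow> 'a::linordered_field) \<Rightarrow> bool" where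
  "pos_def_on I Q \<longleftrightarrow> (\<forall>v. (\<exists>k\<in>I. v k \<noteq> 0) \<longrightarrow> 0 < (\<Sum>k\<in>I. \<Sum>l\<in>I. Q k l * v k * v l))"

lemma pos_def_on_diag_pos:
  fixes Q :: "'i \<Rightarrow> 'i \<Rightarrow> 'a::linordered_field"
  assumes "pos_def_on I Q" "finite I" "a \<in> I"
  shows "0 < Q a a"
proof -
  define v :: "'i \<Rightarrow> 'a" where "v k = (if k = a then 1 else 0)" for k
  have "0 < (\<Sum>k\<in>I. \<Sum>l\<in>I. Q k l * v k * v l)"
    using assms(1,3) unfolding pos_def_on_def by (auto simp: v_def)
  also have "\<dots> = Q a a"
    using assms(2,3) by (simp add: v_def if_distrib [of "\<lambda>x. _ * x"] cong: if_cong)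
  finally show ?thesis .
qed

lemma pos_def_on_schur_complement:
  fixes Q :: "'i \<Rightarrow> 'i \<Rightarrow> 'a::linordered_field"
  assumes "pos_def_on (insert a I) Q" "finite I" "a \<notin> I" "\<And>k l. Q k l = Q l k"
  shows "pos_def_on I (\<lambda>k l. Q k l - Q a k * Q a l / Q a a)"
  unfolding pos_def_on_def
proof (intro allI impI)
  fix v :: "'i \<Rightarrow> 'a"
  assume "\<exists>k\<in>I. v k \<noteq> 0"
  define c where "c = Q a a"
  have "0 < c" using pos_def_on_diag_pos [OF assms(1)] assms(2) by (simp add: c_def)
  define s where "s = (\<Sum>k\<in>I. Q a k * v k)"
  \<comment> \<open>the value at a that minimises the form for fixed v on I\<close>
  define w where "w = v(a := - s / c)"
  have w_I: "w k = v k" if "k \<in> I" for k using that assms(3) by (auto simp: w_def)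
  have "\<exists>k\<in>insert a I. w k \<noteq> 0" using \<open>\<exists>k\<in>I. v k \<noteq> 0\<close> w_I by auto
  then have "0 < (\<Sum>k\<in>insert a I. \<Sum>l\<in>insert a I. Q k l * w k * w l)"
    using assms(1) unfolding pos_def_on_def by blast
  also have "\<dots> = c * w a * w a + 2 * w a * (\<Sum>k\<in>I. Q a k * w k) + (\<Sum>k\<in>I. \<Sum>l\<in>I. Q k l * w k * w l)"
    using assms(2-4) by (simp add: sum.distrib c_def sum_distrib_left sum_distrib_right algebra_simps)
  also have "\<dots> = - s * s / c + (\<Sum>k\<in>I. \<Sum>l\<in>I. Q k l * v k * v l)"
    using \<open>0 < c\<close> w_I by (simp add: s_def w_def field_simps power2_eq_square)
  also have "\<dots> = (\<Sum>k\<in>I. \<Sum>l\<in>I. (Q k l - Q a k * Q a l / Q a a) * v k * v l)"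
    using \<open>0 < c\<close> by (simp add: c_def s_def sum_subtractf sum_product sum_divide_distrib
        algebra_simps sum_distrib_left)
  finally show "0 < (\<Sum>k\<in>I. \<Sum>l\<in>I. (Q k l - Q a k * Q a l / Q a a) * v k * v l)" .
qed

lemma pos_def_on_LDLT:
  fixes Q :: "'i \<Rightarrow> 'i \<Rightarrow> 'a::linordered_field"
  assumes "finite I" "pos_def_on I Q" "\<And>k l. Q k l = Q l k"
  shows "\<exists>d L. (\<forall>i\<in>I. 0 < d i) \<and> (\<forall>k\<in>I. \<forall>l\<in>I. Q k l = (\<Sum>i\<in>I. d i * L i k * L i l))"
  using assms
proof (induction I arbitrary: Q rule: finite_induct)
  case empty
  then show ?case by auto
next
  case (insert a I Q)
  define c where "c = Q a a"
  have "0 < c" using pos_def_on_diag_pos [OF insert.prems(1)] insert.hyps(1) by (simp add: c_def)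
  define Q' where "Q' k l = Q k l - Q a k * Q a l / c" for k l
  have "pos_def_on I Q'"
    unfolding Q'_def c_def
    using pos_def_on_schur_complement [OF insert.prems(1) insert.hyps(1,2) insert.prems(2)] .
  moreover have "Q' k l = Q' l k" for k l using insert.prems(2) by (simp add: Q'_def mult.commute)
  ultimately obtain d L where d: "\<forall>i\<in>I. 0 < d i"
    and L: "\<forall>k\<in>I. \<forall>l\<in>I. Q' k l = (\<Sum>i\<in>I. d i * L i k * L i l)"
    using insert.IH by blast
  define L' where "L' i k = (if i = a then Q a k / c else if k \<in> I then L i k else 0)" for i k
  have "Q k l = (\<Sum>i\<in>insert a I. (d(a := c)) i * L' i k * L' i l)" if "k \<in> insert a I" "l \<in> insert a I" for k l
  proof -
    have "(\<Sum>i\<in>insert a I. (d(a := c)) i * L' i k * L' i l)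
        = c * (Q a k / c) * (Q a l / c) + (\<Sum>i\<in>I. d i * L' i k * L' i l)"
      using insert.hyps by (simp add: L'_def cong: if_cong) (intro sum.cong, auto)
    also have "\<dots> = Q k l"
    proof (cases "k \<in> I \<and> l \<in> I")
      case True
      then have "(\<Sum>i\<in>I. d i * L' i k * L' i l) = Q' k l"
        using L insert.hyps by (auto simp: L'_def intro!: sum.cong)
      then show ?thesis using \<open>0 < c\<close> by (simp add: Q'_def)
    next
      case False
      then have "k = a \<or> l = a" using that by auto
      then have "(\<Sum>i\<in>I. d i * L' i k * L' i l) = 0"
        using insert.hyps by (auto simp: L'_def intro!: sum.neutral)
      then show ?thesis using \<open>0 < c\<close> \<open>k = a \<or> l = a\<close> insert.prems(2) by (auto simp: c_def)
    qed
    finally show ?thesis by simp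
  qed
  moreover have "\<forall>i\<in>insert a I. 0 < (d(a := c)) i" using d \<open>0 < c\<close> by auto
  ultimately show ?case by blast
qed

lemma pos_def_on_perturb:
  fixes P Q :: "'i \<Rightarrow> 'i \<Rightarrow> 'a::linordered_field"
  assumes "finite I"
    and Q: "\<And>w. \<delta> * (\<Sum>k\<in>I. w k ^ 2) \<le> (\<Sum>k\<in>I. \<Sum>l\<in>I. Q k l * w k * w l)"
    and close: "\<And>k l. k \<in> I \<Longrightarrow> l \<in> I \<Longrightarrow> \<bar>P k l - Q k l\<bar> \<le> \<epsilon>"
    and small: "of_nat (card I) * \<epsilon> < \<delta>"
  shows "pos_def_on I P"
  unfolding pos_def_on_def
proof (intro allI impI)
  fix w :: "'i \<Rightarrow> 'a"
  assume "\<exists>k\<in>I. w k \<noteq> 0"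
  then obtain k0 where "k0 \<in> I" "w k0 \<noteq> 0" by blast
  define W where "W = (\<Sum>k\<in>I. w k ^ 2)"
  have "0 < w k0 ^ 2" using \<open>w k0 \<noteq> 0\<close> by simp
  also have "\<dots> \<le> W" unfolding W_def using \<open>finite I\<close> \<open>k0 \<in> I\<close> by (intro member_le_sum) auto
  finally have "0 < W" .
  have "\<bar>\<Sum>k\<in>I. \<Sum>l\<in>I. (P k l - Q k l) * w k * w l\<bar> \<le> (\<Sum>k\<in>I. \<Sum>l\<in>I. \<epsilon> * ((w k ^ 2 + w l ^ 2) / 2))"
  proof (rule order_trans [OF sum_abs], rule sum_mono, rule order_trans [OF sum_abs], rule sum_mono)
    fix k l assume "k \<in> I" "l \<in> I"
    have "\<bar>w k\<bar> * \<bar>w l\<bar> \<le> (w k ^ 2 + w l ^ 2) / 2"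
      using sum_squares_bound [of "\<bar>w k\<bar>" "\<bar>w l\<bar>"] by simp
    then show "\<bar>(P k l - Q k l) * w k * w l\<bar> \<le> \<epsilon> * ((w k ^ 2 + w l ^ 2) / 2)"
      unfolding abs_mult mult.assoc
      using close [OF \<open>k \<in> I\<close> \<open>l \<in> I\<close>] by (intro mult_mono) auto
  qed
  also have "\<dots> = of_nat (card I) * \<epsilon> * W"
    by (simp add: W_def sum.distrib sum_distrib_left sum_distrib_right add_divide_distrib
        sum_divide_distrib [symmetric] algebra_simps)
  finally have err: "\<bar>\<Sum>k\<in>I. \<Sum>l\<in>I. (P k l - Q k l) * w k * w l\<bar> \<le> of_nat (card I) * \<epsilon> * W" .
  have "(\<Sum>k\<in>I. \<Sum>l\<in>I. P k l * w k * w l)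
      = (\<Sum>k\<in>I. \<Sum>l\<in>I. Q k l * w k * w l) + (\<Sum>k\<in>I. \<Sum>l\<in>I. (P k l - Q k l) * w k * w l)"
    by (simp add: sum.distrib [symmetric] algebra_simps)
  also have "\<dots> \<ge> (\<delta> - of_nat (card I) * \<epsilon>) * W"
    using Q [of w] err unfolding W_def left_diff_distrib by linarith
  finally show "0 < (\<Sum>k\<in>I. \<Sum>l\<in>I. P k l * w k * w l)"
    using small \<open>0 < W\<close> by (auto intro: less_le_trans [rotated])
qed

lemma pos_def_on_of_rat:
  fixes P :: "'i \<Rightarrow> 'i \<Rightarrow> rat"
  assumes "pos_def_on I (\<lambda>k l. of_rat (P k l) :: 'a::linordered_field)"
  shows "pos_def_on I P"
  unfolding pos_def_on_def
proof (intro allI impI)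
  fix v :: "'i \<Rightarrow> rat"
  assume "\<exists>k\<in>I. v k \<noteq> 0"
  then have "(0::'a) < (\<Sum>k\<in>I. \<Sum>l\<in>I. of_rat (P k l) * of_rat (v k) * of_rat (v l))"
    using assms unfolding pos_def_on_def by (auto dest!: spec [of _ "\<lambda>k. of_rat (v k)"])
  then show "0 < (\<Sum>k\<in>I. \<Sum>l\<in>I. P k l * v k * v l)"
    by (simp add: of_rat_sum [symmetric] of_rat_mult [symmetric] del: of_rat_sum of_rat_mult)
qed

lemma rsquarefree_map_poly_of_rat:
  fixes f :: "rat poly"
  assumes "squarefree f"
  shows "rsquarefree (map_poly of_rat f :: 'a::{field_char_0,field_gcd} poly)"
proof -
  have "square_free f"
    unfolding square_free_def
  proof (intro conjI allI impI notI)
    show "f = 0 \<Longrightarrow> False" using assms by simp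
    fix q :: "rat poly"
    assume "0 < degree q" "q * q dvd f"
    then have "is_unit q" using assms unfolding squarefree_def power2_eq_square by blast
    then show False using \<open>0 < degree q\<close> by (simp add: is_unit_iff_degree)
  qed
  moreover have "field_hom_0' (of_rat :: rat \<Rightarrow> 'a)"
    by unfold_locales (simp_all add: of_rat_add of_rat_mult)
  ultimately have "square_free (map_poly (of_rat :: rat \<Rightarrow> 'a) f)"
    by (simp add: field_hom_0'.square_free_map_poly)
  then show ?thesis by (rule square_free_rsquarefree)
qed

lemma poly_eq_0_if_roots_card_gt_degree:
  fixes p :: "'a::idom poly"
  assumes "finite A" "degree p < card A" "\<And>a. a \<in> A \<Longrightarrow> poly p a = 0"
  shows "p = 0"
proof (rule ccontr)
  assume "p \<noteq> 0"
  then have "card A \<le> card {x. poly p x = 0}"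
    using assms(3) by (intro card_mono poly_roots_finite) auto
  also have "\<dots> \<le> degree p" using \<open>p \<noteq> 0\<close> by (rule card_poly_roots_bound)
  finally show False using assms(2) by simp
qed

lemma rsquarefree_dvd_if_roots:
  fixes p q :: "complex poly"
  assumes "rsquarefree p" "\<And>z. poly p z = 0 \<Longrightarrow> poly q z = 0"
  shows "p dvd q"
proof -
  have "p \<noteq> 0" using assms(1) by (simp add: rsquarefree_def)
  have "q mod p = 0"
  proof (rule ccontr)
    assume "q mod p \<noteq> 0"
    have "degree (q mod p) < card {z. poly p z = 0}"
      using degree_mod_less' [OF \<open>p \<noteq> 0\<close> \<open>q mod p \<noteq> 0\<close>] rsquarefree_card_degree [OF \<open>p \<noteq> 0\<close>] assms(1)
      by simp
    moreover have "poly (q mod p) z = 0" if "z \<in> {z. poly p z = 0}" for z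
      using that assms(2) [of z] by (simp add: poly_mod)
    ultimately have "q mod p = 0"
      using poly_roots_finite [OF \<open>p \<noteq> 0\<close>] by (intro poly_eq_0_if_roots_card_gt_degree)
    with \<open>q mod p \<noteq> 0\<close> show False ..
  qed
  then show ?thesis by (simp add: dvd_eq_mod_eq_0)
qed

lemma exists_poly_interpolating:
  assumes "finite A"
  shows "\<exists>p :: 'a::field poly. \<forall>a\<in>A. poly p a = t a"
proof -
  define p where "p = (\<Sum>b\<in>A. smult (t b / (\<Prod>c\<in>A - {b}. b - c)) (\<Prod>c\<in>A - {b}. [:- c, 1:]))"
  have "poly p a = t a" if "a \<in> A" for a
  proof -
    have "poly p a = (\<Sum>b\<in>A. t b / (\<Prod>c\<in>A - {b}. b - c) * (\<Prod>c\<in>A - {b}. a - c))"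
      by (simp add: p_def poly_sum poly_prod)
    also have "\<dots> = (\<Sum>b\<in>{a}. t b / (\<Prod>c\<in>A - {b}. b - c) * (\<Prod>c\<in>A - {b}. a - c))"
      by (rule sum.mono_neutral_right) (use that assms in \<open>auto simp: prod_zero_iff\<close>)
    also have "\<dots> = t a"
      using assms by (simp add: prod_zero_iff)
    finally show ?thesis .
  qed
  then show ?thesis by blast
qed

lemma exists_real_poly_interpolating:
  assumes "finite A" "\<And>a. a \<in> A \<Longrightarrow> cnj a \<in> A \<and> t (cnj a) = cnj (t a)"
  shows "\<exists>u :: real poly. \<forall>a\<in>A. poly (map_poly of_real u) a = t a"
proof -
  obtain p where p: "\<forall>a\<in>A. poly p a = t a" using exists_poly_interpolating [OF assms(1)] by blast
  \<comment> \<open>the real part of p still interpolates, as t is compatible with conjugation\<close>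
  have "map_poly of_real (map_poly Re p) = smult (1/2) (p + map_poly cnj p)"
    by (rule poly_eqI) (simp add: coeff_map_poly complex_eq_iff)
  then have "poly (map_poly of_real (map_poly Re p)) a = t a" if "a \<in> A" for a
    using p assms(2) [OF that] that by (simp add: poly_map_poly_cnj)
  then show ?thesis by blast
qed

lemma exists_real_sqrt_mod:
  fixes p h :: "real poly"
  assumes "rsquarefree (map_poly of_real p :: complex poly)" "\<And>x. poly p x = 0 \<Longrightarrow> 0 < poly h x"
  shows "\<exists>u. p dvd h - u ^ 2"
proof -
  define pC :: "complex poly" where "pC = map_poly of_real p"
  define hC :: "complex poly" where "hC = map_poly of_real h"
  define A where "A = {z. poly pC z = 0}"
  have "finite A" unfolding A_def using assms(1) by (intro poly_roots_finite) (simp add: rsquarefree_def pC_def)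
  have cnj_hC: "poly hC (cnj z) = cnj (poly hC z)" for z
    by (simp add: hC_def poly_cnj_real)
  have cnj_A: "cnj z \<in> A" if "z \<in> A" for z
    using that by (simp add: A_def pC_def flip: poly_cnj_real)
  \<comment> \<open>csqrt commutes with cnj only off the negative reals, so the lower half-plane is handled
     by conjugation; at the real roots h is positive and csqrt is real.\<close>
  define t where "t z = (if Im z < 0 then cnj (csqrt (poly hC (cnj z))) else csqrt (poly hC z))" for z
  have t_sq: "t z ^ 2 = poly hC z" for z
    by (simp add: t_def cnj_hC flip: complex_cnj_power)
  have t_cnj: "t (cnj z) = cnj (t z)" if "z \<in> A" for z
  proof (cases "Im z = 0")
    case True
    then have "z = of_real (Re z)" by (simp add: complex_eq_iff)
    then have "of_real (poly p (Re z)) = poly pC z" by (metis of_real_hom.poly_map_poly pC_def)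
    with that have "poly p (Re z) = 0" by (simp add: A_def)
    then have "0 < poly h (Re z)" by (rule assms(2))
    then have "t z = of_real (sqrt (poly h (Re z)))"
      by (subst \<open>z = of_real (Re z)\<close>) (simp add: t_def hC_def csqrt_of_real)
    moreover have "cnj z = z" using True by (simp add: complex_eq_iff)
    ultimately show ?thesis by simp
  qed (auto simp: t_def)
  obtain u where u: "\<forall>z\<in>A. poly (map_poly of_real u) z = t z"
    using exists_real_poly_interpolating [OF \<open>finite A\<close>] cnj_A t_cnj by blast
  have "pC dvd map_poly of_real (h - u ^ 2)"
  proof (rule rsquarefree_dvd_if_roots)
    show "rsquarefree pC" using assms(1) by (simp add: pC_def)
    show "poly (map_poly of_real (h - u ^ 2)) z = 0" if "poly pC z = 0" for z
      using that u t_sq [of z] by (simp add: A_def hC_def of_real_poly_hom.hom_minus of_real_poly_hom.hom_power)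
  qed
  then have "p dvd h - u ^ 2" unfolding pC_def by (rule of_real_hom.dvd_map_poly_hom_imp_dvd)
  then show ?thesis by blast
qed

lemma exists_pos_margin:
  fixes g s :: "'a \<Rightarrow> real"
  assumes "finite X" "\<And>x. x \<in> X \<Longrightarrow> 0 < g x"
  obtains \<delta> where "0 < \<delta>" "\<And>x. x \<in> X \<Longrightarrow> \<delta> * s x < g x"
proof -
  have "\<forall>\<^sub>F \<delta> in at_right 0. \<forall>x\<in>X. \<delta> * s x < g x"
  proof (rule eventually_ball_finite [OF assms(1)], intro ballI)
    fix x assume "x \<in> X"
    have "((\<lambda>\<delta>. \<delta> * s x) \<longlongrightarrow> 0 * s x) (at_right 0)"
      by (intro tendsto_intros)
    then show "\<forall>\<^sub>F \<delta> in at_right 0. \<delta> * s x < g x"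
      using assms(2) [OF \<open>x \<in> X\<close>] by (auto dest: order_tendstoD(2))
  qed
  moreover have "\<forall>\<^sub>F \<delta> in at_right (0::real). 0 < \<delta>" by (rule eventually_at_right_less)
  ultimately have "\<exists>\<delta>. 0 < \<delta> \<and> (\<forall>x\<in>X. \<delta> * s x < g x)"
    using eventually_happens' [OF trivial_limit_at_right_real] eventually_conj by blast
  then show ?thesis using that by blast
qed

lemma sum_monom_coeff_lessThan:
  assumes "\<And>k. n \<le> k \<Longrightarrow> coeff p k = 0"
  shows "(\<Sum>k<n. monom (coeff p k) k) = p"
  by (rule poly_eqI) (use assms in \<open>auto simp: coeff_sum coeff_monom not_less\<close>)

lemma real_gram_certificate:
  fixes f g :: "real poly"
  assumes "rsquarefree (map_poly of_real f :: complex poly)" "\<And>x. poly f x = 0 \<Longrightarrow> 0 < poly g x"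
  obtains \<delta> Q where "0 < \<delta>" "\<And>k l. Q k l = Q l k"
    "\<And>w. \<delta> * (\<Sum>k<degree f. w k ^ 2) \<le> (\<Sum>k<degree f. \<Sum>l<degree f. Q k l * w k * w l)"
    "f dvd g - gram_poly Q (degree f)"
proof -
  define n where "n = degree f"
  define S :: "real poly" where "S = (\<Sum>k<n. monom 1 (2 * k))"
  have "f \<noteq> 0" using assms(1) by (auto simp: rsquarefree_def)
  obtain \<delta> where "0 < \<delta>" and \<delta>: "\<And>x. x \<in> {x. poly f x = 0} \<Longrightarrow> \<delta> * poly S x < poly g x"
    using exists_pos_margin [OF poly_roots_finite [OF \<open>f \<noteq> 0\<close>]] assms(2) by blast
  obtain u where u: "f dvd g - smult \<delta> S - u ^ 2"
    using exists_real_sqrt_mod [OF assms(1), of "g - smult \<delta> S"] \<delta> by auto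
  define a where "a k = coeff (u mod f) k" for k
  define Q where "Q k l = a k * a l + (if k = l then \<delta> else 0)" for k l
  have "(\<Sum>k<n. monom (a k) k) = u mod f"
    unfolding a_def
  proof (rule sum_monom_coeff_lessThan)
    fix k assume "n \<le> k"
    then show "coeff (u mod f) k = 0"
      using degree_mod_less [OF \<open>f \<noteq> 0\<close>, of u] unfolding n_def
      by (cases "u mod f = 0") (auto intro: coeff_eq_0)
  qed
  then have "gram_poly Q n = (u mod f) ^ 2 + smult \<delta> S"
    unfolding Q_def gram_poly_add gram_poly_outer gram_poly_diagonal
    by (simp add: S_def smult_sum2 smult_monom)
  moreover have "f dvd u ^ 2 - (u mod f) ^ 2"
    by (simp add: mod_eq_dvd_iff [symmetric] power_mod)
  ultimately have "f dvd g - gram_poly Q n"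
    using dvd_add [OF u \<open>f dvd u ^ 2 - (u mod f) ^ 2\<close>] by (simp add: algebra_simps)
  moreover have "\<delta> * (\<Sum>k<n. w k ^ 2) \<le> (\<Sum>k<n. \<Sum>l<n. Q k l * w k * w l)" for w
  proof -
    have "(\<Sum>k<n. \<Sum>l<n. Q k l * w k * w l)
        = (\<Sum>k<n. \<Sum>l<n. (a k * w k) * (a l * w l) + (if k = l then \<delta> * w k * w l else 0))"
      by (intro sum.cong refl) (simp add: Q_def algebra_simps)
    also have "\<dots> = (\<Sum>k<n. \<Sum>l<n. (a k * w k) * (a l * w l))
        + (\<Sum>k<n. \<Sum>l<n. if k = l then \<delta> * w k * w l else 0)"
      by (simp only: sum.distrib)
    also have "\<dots> = (\<Sum>k<n. a k * w k) ^ 2 + \<delta> * (\<Sum>k<n. w k ^ 2)"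
      by (simp only: power2_eq_square sum_product) (simp add: sum_distrib_left mult.assoc)
    finally show ?thesis by simp
  qed
  moreover have "Q k l = Q l k" for k l by (simp add: Q_def mult.commute)
  ultimately show ?thesis using that \<open>0 < \<delta>\<close> unfolding n_def by blast
qed

lemma exists_rat_approx_fun:
  fixes \<eta> :: real
  assumes "0 < \<eta>"
  obtains r where "\<And>x. \<bar>of_rat (r x) - x\<bar> < \<eta>"
proof -
  have "\<exists>q. \<bar>of_rat q - x\<bar> < \<eta>" for x
  proof -
    obtain q where "x - \<eta> < of_rat q" "of_rat q < x" using of_rat_dense [of "x - \<eta>" x] assms by auto
    then show ?thesis by (intro exI [of _ q]) auto
  qed
  then show ?thesis using that by metis
qed

lemma exists_rat_poly_approx:
  fixes q :: "real poly"
  assumes "0 < \<eta>"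
  obtains q' :: "rat poly"
  where "\<And>j. coeff q j = 0 \<Longrightarrow> coeff q' j = 0" "\<And>j. \<bar>of_rat (coeff q' j) - coeff q j\<bar> < \<eta>"
proof -
  obtain r where r: "\<And>x. \<bar>of_rat (r x) - x\<bar> < \<eta>" using exists_rat_approx_fun [OF assms] by blast
  define q' where "q' = (\<Sum>j\<le>degree q. monom (if coeff q j = 0 then 0 else r (coeff q j)) j)"
  have coeff_q': "coeff q' j = (if coeff q j = 0 then 0 else r (coeff q j))" for j
    by (auto simp: q'_def coeff_sum coeff_monom coeff_eq_0)
  show ?thesis
    by (rule that [of q']) (use r assms in \<open>auto simp: coeff_q'\<close>)
qed

lemma abs_coeff_mult_le:
  fixes p q :: "'a::linordered_idom poly"
  assumes "\<And>j. \<bar>coeff q j\<bar> \<le> \<epsilon>"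
  shows "\<bar>coeff (p * q) m\<bar> \<le> (\<Sum>i\<le>m. \<bar>coeff p i\<bar>) * \<epsilon>"
  unfolding coeff_mult sum_distrib_right
  by (rule order_trans [OF sum_abs], rule sum_mono) (simp add: abs_mult mult_left_mono assms)

lemma degree_gram_residual_le:
  fixes f g q' :: "rat poly" and q :: "real poly"
  assumes deg_g: "degree g < degree f"
    and q: "map_poly of_rat g - gram_poly Q (degree f) = map_poly of_rat f * q"
    and q'_0: "\<And>j. coeff q j = 0 \<Longrightarrow> coeff q' j = 0"
  shows "degree (g - gram_poly R (degree f) - f * q') \<le> 2 * degree f - 2"
proof -
  have "degree (f * q') \<le> 2 * degree f - 2"
  proof (cases "q = 0")
    case True
    then have "q' = 0" using q'_0 by (intro poly_eqI) simp
    then show ?thesis by simp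
  next
    case False
    have "degree (map_poly of_rat f * q) \<le> 2 * degree f - 2"
      unfolding q [symmetric] using deg_g degree_gram_poly_le [of Q "degree f"]
      by (intro degree_diff_le) auto
    moreover have "f \<noteq> 0" using deg_g by auto
    ultimately have "degree f + degree q \<le> 2 * degree f - 2"
      using False by (simp add: degree_mult_eq)
    moreover have "degree q' \<le> degree q" by (rule degree_le) (auto intro: q'_0 coeff_eq_0)
    ultimately show ?thesis using degree_mult_le [of f q'] by linarith
  qed
  then show ?thesis
    using deg_g degree_gram_poly_le [of R "degree f"] by (intro degree_diff_le) auto
qed

lemma abs_coeff_gram_residual_le:
  fixes f g q' :: "rat poly" and q :: "real poly" and Q :: "nat \<Rightarrow> nat \<Rightarrow> real"
  assumes q: "map_poly of_rat g - gram_poly Q n = map_poly of_rat f * q"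
    and R: "\<And>k l. \<bar>of_rat (R k l) - Q k l\<bar> \<le> \<eta>"
    and q': "\<And>j. \<bar>of_rat (coeff q' j) - coeff q j\<bar> \<le> \<eta>"
  shows "\<bar>of_rat (coeff (g - gram_poly R n - f * q') m)\<bar>
    \<le> (real (n * n) + (\<Sum>i\<le>m. \<bar>coeff (map_poly of_rat f) i\<bar>)) * \<eta>"
proof -
  define D where "D k l = Q k l - of_rat (R k l)" for k l
  define d where "d = q - map_poly of_rat q'"
  have "map_poly of_rat (g - gram_poly R n - f * q')
      = map_poly of_rat g - gram_poly (\<lambda>k l. of_rat (R k l)) n - map_poly of_rat f * map_poly of_rat q'"
    by (simp add: map_poly_gram_poly of_rat_poly_hom.hom_minus of_rat_poly_hom.hom_mult)
  also have "\<dots> = gram_poly D n + map_poly of_rat f * d"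
    unfolding D_def d_def gram_poly_diff right_diff_distrib using q by (simp add: algebra_simps)
  finally have "coeff (map_poly of_rat (g - gram_poly R n - f * q')) m
      = coeff (gram_poly D n) m + coeff (map_poly of_rat f * d) m"
    by (simp only: coeff_add)
  then have "of_rat (coeff (g - gram_poly R n - f * q') m)
      = coeff (gram_poly D n) m + coeff (map_poly of_rat f * d) m"
    by (simp only: coeff_map_poly of_rat_0)
  moreover have "\<bar>coeff (gram_poly D n) m\<bar> \<le> real (n * n) * \<eta>"
    by (rule abs_coeff_gram_poly_le) (use R in \<open>simp add: D_def abs_minus_commute\<close>)
  moreover have "\<bar>coeff (map_poly of_rat f * d) m\<bar> \<le> (\<Sum>i\<le>m. \<bar>coeff (map_poly of_rat f) i\<bar>) * \<eta>"
    by (rule abs_coeff_mult_le) (use q' in \<open>simp add: d_def abs_minus_commute\<close>)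
  ultimately show ?thesis using abs_triangle_ineq by (simp add: distrib_right)
qed

lemma rational_gram_certificate:
  fixes f g :: "rat poly" and Q :: "nat \<Rightarrow> nat \<Rightarrow> real"
  assumes deg_g: "degree g < degree f" and "0 < \<delta>" and Q_sym: "\<And>k l. Q k l = Q l k"
    and Q_pos: "\<And>w. \<delta> * (\<Sum>k<degree f. w k ^ 2) \<le> (\<Sum>k<degree f. \<Sum>l<degree f. Q k l * w k * w l)"
    and Q_rep: "map_poly of_rat f dvd map_poly of_rat g - gram_poly Q (degree f)"
  obtains P where "\<And>k l. P k l = P l k" "pos_def_on {..<degree f} P" "f dvd g - gram_poly P (degree f)"
proof -
  define n where "n = degree f"
  define fR :: "real poly" where "fR = map_poly of_rat f"
  have "0 < n" using deg_g by (simp add: n_def)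
  obtain q where q: "map_poly of_rat g - gram_poly Q n = fR * q"
    using Q_rep unfolding fR_def n_def by (elim dvdE)
  define F where "F = (\<Sum>i\<le>2 * n. \<bar>coeff fR i\<bar>)"
  define K where "K = 1 + real (n * n) + F"
  define \<eta> where "\<eta> = \<delta> / (2 * K * n)"
  have "1 \<le> K" by (simp add: K_def F_def sum_nonneg)
  have "0 < \<eta>" using \<open>0 < \<delta>\<close> \<open>1 \<le> K\<close> \<open>0 < n\<close> by (simp add: \<eta>_def)
  \<comment> \<open>Round Q and the quotient q; the rational residual e is absorbed by a small Hankel correction.\<close>
  obtain r where r: "\<And>x. \<bar>of_rat (r x) - x\<bar> < \<eta>" using exists_rat_approx_fun [OF \<open>0 < \<eta>\<close>] by blast
  obtain q' where q'_0: "\<And>j. coeff q j = 0 \<Longrightarrow> coeff q' j = 0"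
    and q'_close: "\<And>j. \<bar>of_rat (coeff q' j) - coeff q j\<bar> < \<eta>"
    using exists_rat_poly_approx [OF \<open>0 < \<eta>\<close>] by blast
  define e where "e = g - gram_poly (\<lambda>k l. r (Q k l)) n - f * q'"
  have deg_e: "degree e \<le> 2 * n - 2"
    using deg_g q [unfolded fR_def n_def] q'_0 unfolding e_def n_def by (rule degree_gram_residual_le)
  have coeff_e: "\<bar>of_rat (coeff e m)\<bar> \<le> (real (n * n) + F) * \<eta>" if "m \<le> 2 * n - 2" for m
  proof -
    have "\<bar>of_rat (coeff e m)\<bar> \<le> (real (n * n) + (\<Sum>i\<le>m. \<bar>coeff fR i\<bar>)) * \<eta>"
      unfolding e_def fR_def
      by (rule abs_coeff_gram_residual_le [OF q [unfolded fR_def]])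
         (use r q'_close in \<open>auto intro: less_imp_le\<close>)
    also have "\<dots> \<le> (real (n * n) + F) * \<eta>"
      unfolding F_def using \<open>0 < \<eta>\<close> that by (intro mult_right_mono add_left_mono sum_mono2) auto
    finally show ?thesis .
  qed
  obtain E where E: "gram_poly E n = e" "\<And>k l. E k l = E l k" "\<And>k l. \<bar>E k l\<bar> \<le> \<bar>coeff e (k + l)\<bar>"
    using exists_hankel_gram [OF \<open>0 < n\<close> deg_e] by blast
  define P where "P k l = r (Q k l) + E k l" for k l
  have "gram_poly P n = g - f * q'" unfolding P_def gram_poly_add E(1) e_def by simp
  then have P_rep: "f dvd g - gram_poly P n" by simp
  have P_sym: "P k l = P l k" for k l using Q_sym [of k l] E(2) [of k l] by (simp add: P_def)
  have "pos_def_on {..<n} P"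
  proof (rule pos_def_on_of_rat [where 'a = real], rule pos_def_on_perturb)
    show "\<delta> * (\<Sum>k\<in>{..<n}. w k ^ 2) \<le> (\<Sum>k\<in>{..<n}. \<Sum>l\<in>{..<n}. Q k l * w k * w l)" for w
      using Q_pos unfolding n_def .
    show "\<bar>of_rat (P k l) - Q k l\<bar> \<le> K * \<eta>" if "k \<in> {..<n}" "l \<in> {..<n}" for k l
    proof -
      have "\<bar>of_rat (E k l) :: real\<bar> \<le> \<bar>of_rat (coeff e (k + l))\<bar>"
        using E(3) [of k l] by (simp add: abs_of_rat of_rat_less_eq)
      also have "\<dots> \<le> (real (n * n) + F) * \<eta>" using that by (intro coeff_e) auto
      finally have "\<bar>of_rat (E k l) :: real\<bar> \<le> (real (n * n) + F) * \<eta>" .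
      moreover have "\<bar>of_rat (r (Q k l)) - Q k l\<bar> < \<eta>" by (rule r)
      moreover have "of_rat (P k l) - Q k l = (of_rat (r (Q k l)) - Q k l) + of_rat (E k l)"
        by (simp add: P_def of_rat_add)
      moreover have "K * \<eta> = \<eta> + (real (n * n) + F) * \<eta>" by (simp add: K_def algebra_simps)
      ultimately show ?thesis
        using abs_triangle_ineq [of "of_rat (r (Q k l)) - Q k l" "of_rat (E k l) :: real"] by linarith
    qed
    show "of_nat (card {..<n}) * (K * \<eta>) < \<delta>"
      using \<open>0 < \<delta>\<close> \<open>1 \<le> K\<close> \<open>0 < n\<close> by (simp add: \<eta>_def field_simps)
  qed simp
  with P_sym P_rep show ?thesis using that unfolding n_def by blast
qed

lemma exists_pos_def_gram_mod:
  fixes f g :: "rat poly"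
  assumes "squarefree f" "0 < degree f"
    and "\<And>x::real. poly (map_poly of_rat f) x = 0 \<Longrightarrow> 0 < poly (map_poly of_rat g) x"
  obtains P where "\<And>k l. P k l = P l k" "pos_def_on {..<degree f} P"
    "gram_poly P (degree f) mod f = g mod f"
proof -
  define g0 where "g0 = g mod f"
  define fR :: "real poly" where "fR = map_poly of_rat f"
  have "f \<noteq> 0" using assms(2) by auto
  have deg_fR: "degree fR = degree f" by (simp add: fR_def)
  have deg_g0: "degree g0 < degree f"
    using degree_mod_less [OF \<open>f \<noteq> 0\<close>, of g] assms(2) by (auto simp: g0_def)
  have "rsquarefree (map_poly of_real fR :: complex poly)"
    using rsquarefree_map_poly_of_rat [OF assms(1)]
    by (simp add: fR_def map_poly_map_poly o_def complex_of_real_of_rat)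
  moreover have "0 < poly (map_poly of_rat g0) x" if "poly fR x = 0" for x
  proof -
    have "map_poly (of_rat :: rat \<Rightarrow> real) g = map_poly of_rat (f * (g div f) + g0)"
      by (simp add: g0_def)
    also have "\<dots> = fR * map_poly of_rat (g div f) + map_poly of_rat g0"
      by (simp add: fR_def of_rat_poly_hom.hom_add of_rat_poly_hom.hom_mult)
    finally show ?thesis using assms(3) [of x] that by (simp add: fR_def)
  qed
  ultimately obtain \<delta> Q where "0 < \<delta>" "\<And>k l. Q k l = Q l k"
    "\<And>w. \<delta> * (\<Sum>k<degree f. w k ^ 2) \<le> (\<Sum>k<degree f. \<Sum>l<degree f. Q k l * w k * w l)"
    "fR dvd map_poly of_rat g0 - gram_poly Q (degree f)"
    by (rule real_gram_certificate [of fR, unfolded deg_fR]) auto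
  then obtain P where P_sym: "\<And>k l. P k l = P l k" and P_pos: "pos_def_on {..<degree f} P"
    and P_rep: "f dvd g0 - gram_poly P (degree f)"
    unfolding fR_def by (rule rational_gram_certificate [OF deg_g0]) auto
  have "gram_poly P (degree f) mod f = g0 mod f"
    using P_rep by (simp add: mod_eq_dvd_iff dvd_diff_commute)
  then have "gram_poly P (degree f) mod f = g mod f" by (simp add: g0_def)
  with P_sym P_pos show ?thesis by (rule that)
qed

lemma pos_def_gram_poly_weighted_squares:
  fixes P :: "nat \<Rightarrow> nat \<Rightarrow> 'a::linordered_field"
  assumes "0 < n" "pos_def_on {..<n} P" "\<And>k l. P k l = P l k"
  obtains d H where "\<And>i. i < n \<Longrightarrow> 0 < d i" "\<And>i. degree (H i) < n"
    "gram_poly P n = (\<Sum>i<n. smult (d i) (H i ^ 2))"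
proof -
  obtain d L where d: "\<forall>i\<in>{..<n}. 0 < d i"
    and L: "\<forall>k\<in>{..<n}. \<forall>l\<in>{..<n}. P k l = (\<Sum>i<n. d i * L i k * L i l)"
    using pos_def_on_LDLT [OF finite_lessThan assms(2,3)] by blast
  define H where "H i = (\<Sum>k<n. monom (L i k) k)" for i
  have "degree (H i) < n" for i
    using assms(1) by (intro le_less_trans [OF degree_le [of "n - 1"]]) (auto simp: H_def coeff_sum coeff_monom)
  moreover have "gram_poly P n = (\<Sum>i<n. smult (d i) (H i ^ 2))"
    unfolding H_def by (rule gram_poly_weighted_squares) (use L in auto)
  ultimately show ?thesis using d that by blast
qed

theorem mainTheorem6:
  fixes f g :: "rat poly" and n :: nat
  assumes "f \<noteq> 0"
    and "squarefree f"
    and "degree f = n"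
    and "\<And>\<xi>::real. poly (map_poly of_rat f) \<xi> = 0 \<Longrightarrow> poly (map_poly of_rat g) \<xi> > 0"
  shows "\<exists>(h :: nat \<Rightarrow> rat poly) (\<omega> :: nat \<Rightarrow> rat).
           (\<forall>i\<in>{1..n}. degree (h i) < n \<and> \<omega> i > 0) \<and>
           (\<Sum>i=1..n. smult (\<omega> i) ((h i)^2)) mod f = g mod f"
proof (cases "n = 0")
  case True
  then have "g mod f = 0" using degree_mod_less [of f g] assms(1,3) by auto
  then show ?thesis using True by (intro exI [of _ "\<lambda>_. 0"] exI [of _ "\<lambda>_. 1"]) simp
next
  case False
  then obtain P where "\<And>k l. P k l = P l k" "pos_def_on {..<n} P" and P_rep: "gram_poly P n mod f = g mod f"
    using exists_pos_def_gram_mod [OF assms(2)] assms(3,4) by auto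
  then obtain d H where d: "\<And>i. i < n \<Longrightarrow> 0 < d i" and H: "\<And>i. degree (H i) < n"
    and sum: "gram_poly P n = (\<Sum>i<n. smult (d i) (H i ^ 2))"
    using pos_def_gram_poly_weighted_squares [of n P] False by blast
  show ?thesis
  proof (intro exI [of _ "\<lambda>i. H (i - 1)"] exI [of _ "\<lambda>i. d (i - 1)"] conjI ballI)
    show "degree (H (i - 1)) < n" "0 < d (i - 1)" if "i \<in> {1..n}" for i
      using that H d by auto
    show "(\<Sum>i=1..n. smult (d (i - 1)) (H (i - 1) ^ 2)) mod f = g mod f"
      using P_rep by (simp add: sum sum.atLeast1_atMost_eq)
  qed
qed

end
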